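(* Let $(\mathbf a_1,\mathbf a_2,\mathbf a_3)$ be a nondegenerate m-triangle, and let $\mathbf t_i$ be the torque with respect to the center of mass $O$ of the Newtonian gravitational forces acting at $P_i$, i.e. $\mathbf t_i=\mathbf a_i\times\sum_{j\ne i}\frac{m_im_j}{r_{ij}^3}(\mathbf a_j-\mathbf a_i)$. Then, for $i$ mod $3$, $$\mathbf t_i=\dot{\mathbf\Omega}_i=2m_1m_2m_3\Delta\Big(\frac1{r_{i,i+1}^3}-\frac1{r_{i,i+2}^3}\Big)\mathbf n,$$ where $\mathbf n$ is the unit normal vector such that $(\mathbf a_1,\mathbf a_2,\mathbf n)$ is right-handed.
   Context: Masses $m_1,m_2,m_3>0$ with $m_1+m_2+m_3=1$; position vectors $\mathbf a_i=\overrightarrow{OP_i}$ with $\sum m_i\mathbf a_i=0$; $r_{ij}=|\mathbf a_i-\mathbf a_j|$; $\Delta$ is the area of the triangle $P_1P_2P_3$; $\mathbf\Omega_i=m_i\mathbf a_i\times\dot{\mathbf a}_i$ is the individual angular momentum, whose derivative along a motion satisfying Newton's equations $m_i\ddot{\mathbf a}_i=\sum_{j\neq i}\frac{m_im_j}{r_{ij}^3}(\mathbf a_j-\mathbf a_i)$ equals $\mathbf t_i$. *)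

theory Defs
  imports "HOL-Analysis.Analysis"
begin

text \<open>Bodies are indexed by 0,1,2 (paper's P_1,P_2,P_3); indices are taken mod 3.
  Configuration a :: nat => real^3 (only a 0, a 1, a 2 matter), masses m :: nat => real.\<close>

definition rdist :: "(nat \<Rightarrow> real^3) \<Rightarrow> nat \<Rightarrow> nat \<Rightarrow> real" where
  "rdist a i j = norm (a i - a j)"

definition grav_force :: "(nat \<Rightarrow> real) \<Rightarrow> (nat \<Rightarrow> real^3) \<Rightarrow> nat \<Rightarrow> real^3" where
  "grav_force m a i = (\<Sum>j\<in>{0..2} - {i}. (m i * m j / (rdist a i j) ^ 3) *\<^sub>R (a j - a i))"

definition torque :: "(nat \<Rightarrow> real) \<Rightarrow> (nat \<Rightarrow> real^3) \<Rightarrow> nat \<Rightarrow> real^3" where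
  "torque m a i = cross3 (a i) (grav_force m a i)"

definition tri_area :: "(nat \<Rightarrow> real^3) \<Rightarrow> real" where
  "tri_area a = norm (cross3 (a 1 - a 0) (a 2 - a 0)) / 2"

definition nondeg_m_triangle :: "(nat \<Rightarrow> real) \<Rightarrow> (nat \<Rightarrow> real^3) \<Rightarrow> bool" where
  "nondeg_m_triangle m a \<longleftrightarrow>
     (\<forall>i\<in>{0..2}. m i > 0) \<and> m 0 + m 1 + m 2 = 1 \<and>
     (\<Sum>i\<in>{0..2}. m i *\<^sub>R a i) = 0 \<and>
     cross3 (a 1 - a 0) (a 2 - a 0) \<noteq> 0"

end

theory Submission
  imports Defs
begin

(* The centre-of-mass relation m0 a0 + m1 a1 + m2 a2 = 0, crossed with the a_i, shows that
   L = m_i m_(i+1) (a_i x a_(i+1)) is the same for i = 0, 1, 2.  As (a1 - a0) x (a2 - a0) is the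
   sum of the three cyclic products a_i x a_(i+1) and m0 + m1 + m2 = 1, this gives
   L = m0 m1 m2 (a1 - a0) x (a2 - a0) = 2 m0 m1 m2 Delta n.  The torque on P_i is
   sum_j m_i m_j r_ij^-3 (a_i x a_j), whose two terms are L / r_(i,i+1)^3 and -L / r_(i,i+2)^3.
   That it is the derivative of Omega_i is the product rule, the term v_i x v_i vanishing. *)

lemma bounded_bilinear_cross3: "bounded_bilinear cross3"
  using bilinear_conv_bounded_bilinear bilinear_cross by blast

lemma cross3_diff_diff: "cross3 (y - x) (z - x) = cross3 y z + cross3 z x + cross3 x y"
  by (simp add: Cross3.left_diff_distrib Cross3.right_diff_distrib
      cross_skew[of x z] cross_skew[of y x])

lemma cross_moments_eq_of_zero_combination:
  fixes x y z :: "real^3"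
  assumes "\<alpha> *\<^sub>R x + \<beta> *\<^sub>R y + \<gamma> *\<^sub>R z = 0"
  shows "(\<beta> * \<gamma>) *\<^sub>R cross3 y z = (\<alpha> * \<beta>) *\<^sub>R cross3 x y"
    and "(\<gamma> * \<alpha>) *\<^sub>R cross3 z x = (\<alpha> * \<beta>) *\<^sub>R cross3 x y"
proof -
  have "cross3 (\<alpha> *\<^sub>R x + \<beta> *\<^sub>R y + \<gamma> *\<^sub>R z) y = 0"
    using assms by simp
  then have "\<gamma> *\<^sub>R cross3 y z = \<alpha> *\<^sub>R cross3 x y"
    by (simp add: cross_add_left cross_mult_left cross_skew[of z y] add_eq_0_iff2)
  then show "(\<beta> * \<gamma>) *\<^sub>R cross3 y z = (\<alpha> * \<beta>) *\<^sub>R cross3 x y"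
    by (simp add: mult.commute[of _ \<beta>] flip: scaleR_scaleR)
  have "cross3 x (\<alpha> *\<^sub>R x + \<beta> *\<^sub>R y + \<gamma> *\<^sub>R z) = 0"
    using assms by simp
  then have "\<gamma> *\<^sub>R cross3 z x = \<beta> *\<^sub>R cross3 x y"
    by (simp add: cross_add_right cross_mult_right cross_skew[of x z] add_eq_0_iff2)
  then show "(\<gamma> * \<alpha>) *\<^sub>R cross3 z x = (\<alpha> * \<beta>) *\<^sub>R cross3 x y"
    by (simp add: mult.commute[of _ \<alpha>] flip: scaleR_scaleR)
qed

lemma cross_eq_norm_scaleR_unit_normal:
  fixes x y n :: "real^3"
  assumes "norm n = 1" and "n \<bullet> x = 0" and "n \<bullet> y = 0" and "cross3 x y \<bullet> n > 0"
  shows "cross3 x y = norm (cross3 x y) *\<^sub>R n"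
proof -
  define w where "w = cross3 x y"
  have "cross3 w n = 0"
    using assms(2,3) Lagrange[of n x y] by (simp add: w_def cross_skew[of _ n])
  then have "(w \<bullet> n)\<^sup>2 = (norm w)\<^sup>2"
    using norm_cross_dot[of w n] assms(1) by simp
  then have "w \<bullet> n = norm w"
    using assms(4) w_def by (simp add: power2_eq_iff_nonneg)
  then show ?thesis
    using norm_cauchy_schwarz_eq[of w n] assms(1) unfolding w_def by simp
qed

lemma has_vector_derivative_angular_momentum:
  fixes x v :: "real \<Rightarrow> real^3"
  assumes x': "(x has_vector_derivative v t) (at t)"
    and v': "(v has_vector_derivative (1 / \<mu>) *\<^sub>R f) (at t)" and "\<mu> \<noteq> 0"
  shows "((\<lambda>s. \<mu> *\<^sub>R cross3 (x s) (v s)) has_vector_derivative cross3 (x t) f) (at t)"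
proof -
  have "((\<lambda>s. cross3 (x s) (v s)) has_vector_derivative
          cross3 (x t) ((1 / \<mu>) *\<^sub>R f) + cross3 (v t) (v t)) (at t)"
    by (rule bounded_bilinear.has_vector_derivative[OF bounded_bilinear_cross3 x' v'])
  then have "((\<lambda>s. \<mu> *\<^sub>R cross3 (x s) (v s)) has_vector_derivative
          \<mu> *\<^sub>R (cross3 (x t) ((1 / \<mu>) *\<^sub>R f) + cross3 (v t) (v t))) (at t)"
    by (rule bounded_linear.has_vector_derivative[OF bounded_linear_scaleR_right])
  then show ?thesis
    using \<open>\<mu> \<noteq> 0\<close> by (simp add: cross_mult_right)
qed

lemma nondeg_m_triangleD:
  assumes "nondeg_m_triangle m a"
  shows "m 0 > 0" "m 1 > 0" "m 2 > 0" "m 0 + m 1 + m 2 = 1"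
    and "m 0 *\<^sub>R a 0 + m 1 *\<^sub>R a 1 + m 2 *\<^sub>R a 2 = 0"
proof -
  have "{0..2::nat} = {0, 1, 2}" by auto
  then show "m 0 > 0" "m 1 > 0" "m 2 > 0" "m 0 + m 1 + m 2 = 1"
    and "m 0 *\<^sub>R a 0 + m 1 *\<^sub>R a 1 + m 2 *\<^sub>R a 2 = 0"
    using assms unfolding nondeg_m_triangle_def by (simp_all add: add.assoc)
qed

lemma torque_eq_sum_cross:
  "torque m a i = (\<Sum>j\<in>{0..2} - {i}. (m i * m j / rdist a i j ^ 3) *\<^sub>R cross3 (a i) (a j))"
  unfolding torque_def grav_force_def
  by (simp add: bounded_bilinear.sum_right[OF bounded_bilinear_cross3] cross_mult_right
      Cross3.right_diff_distrib)

lemma cyclic_mass_moment_eq: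
  fixes m :: "nat \<Rightarrow> real" and a :: "nat \<Rightarrow> real^3"
  assumes com: "m 0 *\<^sub>R a 0 + m 1 *\<^sub>R a 1 + m 2 *\<^sub>R a 2 = 0" and i: "i \<in> {0..2}"
  shows "(m i * m ((i + 1) mod 3)) *\<^sub>R cross3 (a i) (a ((i + 1) mod 3))
       = (m 0 * m 1) *\<^sub>R cross3 (a 0) (a 1)"
proof -
  consider "i = 0" | "i = 1" | "i = 2"
    using i by fastforce
  then show ?thesis
    using cross_moments_eq_of_zero_combination[OF com] by cases (simp_all add: numeral_2_eq_2)
qed

lemma mass_moment_eq_area_moment:
  fixes m :: "nat \<Rightarrow> real" and a :: "nat \<Rightarrow> real^3"
  assumes com: "m 0 *\<^sub>R a 0 + m 1 *\<^sub>R a 1 + m 2 *\<^sub>R a 2 = 0" and msum: "m 0 + m 1 + m 2 = 1"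
  shows "(m 0 * m 1) *\<^sub>R cross3 (a 0) (a 1)
       = (m 0 * m 1 * m 2) *\<^sub>R cross3 (a 1 - a 0) (a 2 - a 0)"
proof -
  let ?L = "(m 0 * m 1) *\<^sub>R cross3 (a 0) (a 1)"
  have "(m 0 * m 1 * m 2) *\<^sub>R cross3 (a 1 - a 0) (a 2 - a 0)
      = m 0 *\<^sub>R ((m 1 * m 2) *\<^sub>R cross3 (a 1) (a 2)) + m 1 *\<^sub>R ((m 2 * m 0) *\<^sub>R cross3 (a 2) (a 0))
        + m 2 *\<^sub>R ?L"
    by (simp add: cross3_diff_diff scaleR_add_right mult_ac)
  also have "\<dots> = (m 0 + m 1 + m 2) *\<^sub>R ?L"
    using cross_moments_eq_of_zero_combination[OF com] by (simp add: scaleR_add_left distrib_right)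
  finally show ?thesis
    using msum by simp
qed

lemma torque_eq_cyclic:
  fixes m :: "nat \<Rightarrow> real" and a :: "nat \<Rightarrow> real^3"
  assumes com: "m 0 *\<^sub>R a 0 + m 1 *\<^sub>R a 1 + m 2 *\<^sub>R a 2 = 0" and i: "i \<in> {0..2}"
  shows "torque m a i = (1 / rdist a i ((i + 1) mod 3) ^ 3 - 1 / rdist a i ((i + 2) mod 3) ^ 3)
                        *\<^sub>R ((m 0 * m 1) *\<^sub>R cross3 (a 0) (a 1))"
proof -
  define j k where "j = (i + 1) mod 3" and "k = (i + 2) mod 3"
  let ?L = "(m 0 * m 1) *\<^sub>R cross3 (a 0) (a 1)"
  consider "i = 0" | "i = 1" | "i = 2"
    using i by fastforce
  then have others: "{0..2} - {i} = {j, k}" and "j \<noteq> k" and k_succ: "(k + 1) mod 3 = i"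
    unfolding j_def k_def by (cases; auto)+
  have moment_j: "(m i * m j) *\<^sub>R cross3 (a i) (a j) = ?L"
    using cyclic_mass_moment_eq[OF com i] unfolding j_def .
  have "(m i * m k) *\<^sub>R cross3 (a i) (a k)
      = - ((m k * m ((k + 1) mod 3)) *\<^sub>R cross3 (a k) (a ((k + 1) mod 3)))"
    unfolding k_succ by (simp add: cross_skew[of "a i"] mult.commute)
  also have "\<dots> = - ?L"
    using cyclic_mass_moment_eq[OF com] by (simp add: k_def)
  finally have moment_k: "(m i * m k) *\<^sub>R cross3 (a i) (a k) = - ?L" .
  have "torque m a i = (m i * m j / rdist a i j ^ 3) *\<^sub>R cross3 (a i) (a j)
                      + (m i * m k / rdist a i k ^ 3) *\<^sub>R cross3 (a i) (a k)"
    unfolding torque_eq_sum_cross others using \<open>j \<noteq> k\<close> by simp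
  also have "\<dots> = (1 / rdist a i j ^ 3) *\<^sub>R ((m i * m j) *\<^sub>R cross3 (a i) (a j))
                  + (1 / rdist a i k ^ 3) *\<^sub>R ((m i * m k) *\<^sub>R cross3 (a i) (a k))"
    by simp
  also have "\<dots> = (1 / rdist a i j ^ 3 - 1 / rdist a i k ^ 3) *\<^sub>R ?L"
    unfolding moment_j moment_k
    by (simp only: diff_conv_add_uminus scaleR_add_left scaleR_minus_left scaleR_minus_right)
  finally show ?thesis
    unfolding j_def k_def .
qed

theorem mainTheorem10:
  fixes m :: "nat \<Rightarrow> real" and a :: "nat \<Rightarrow> real^3" and n :: "real^3" and i :: nat
  assumes tri: "nondeg_m_triangle m a"
    and i: "i \<in> {0..2}"
    and n_unit: "norm n = 1"
    and n_normal: "n \<bullet> a 0 = 0" "n \<bullet> a 1 = 0"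
    and n_right: "cross3 (a 0) (a 1) \<bullet> n > 0"
  shows "torque m a i =
           (2 * m 0 * m 1 * m 2 * tri_area a *
             (1 / (rdist a i ((i + 1) mod 3)) ^ 3 - 1 / (rdist a i ((i + 2) mod 3)) ^ 3)) *\<^sub>R n
       \<and> (\<forall>(X :: real \<Rightarrow> nat \<Rightarrow> real^3) V S \<tau>.
            open S \<and> \<tau> \<in> S \<and> X \<tau> = a \<and>
            (\<forall>t\<in>S. \<forall>k\<in>{0..2}. ((\<lambda>s. X s k) has_vector_derivative V t k) (at t)) \<and>
            (\<forall>t\<in>S. \<forall>k\<in>{0..2}. ((\<lambda>s. V s k) has_vector_derivative
                 (1 / m k) *\<^sub>R grav_force m (X t) k) (at t))
            \<longrightarrow> ((\<lambda>s. m i *\<^sub>R cross3 (X s i) (V s i)) has_vector_derivative torque m a i) (at \<tau>))"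
proof (intro conjI allI impI)
  note m_pos = nondeg_m_triangleD(1-3)[OF tri]
  note msum = nondeg_m_triangleD(4)[OF tri] and com = nondeg_m_triangleD(5)[OF tri]
  let ?L = "(m 0 * m 1) *\<^sub>R cross3 (a 0) (a 1)"
  have "?L = (m 0 * m 1) *\<^sub>R (norm (cross3 (a 0) (a 1)) *\<^sub>R n)"
    by (subst cross_eq_norm_scaleR_unit_normal[OF n_unit n_normal n_right, symmetric]) (rule refl)
  also have "\<dots> = norm ?L *\<^sub>R n"
    using m_pos by simp
  also have "norm ?L = 2 * m 0 * m 1 * m 2 * tri_area a"
    unfolding mass_moment_eq_area_moment[OF com msum] tri_area_def using m_pos by simp
  finally show "torque m a i =
           (2 * m 0 * m 1 * m 2 * tri_area a *
             (1 / (rdist a i ((i + 1) mod 3)) ^ 3 - 1 / (rdist a i ((i + 2) mod 3)) ^ 3)) *\<^sub>R n"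
    unfolding torque_eq_cyclic[OF com i] by (simp add: mult.commute)
next
  fix X :: "real \<Rightarrow> nat \<Rightarrow> real^3" and V S \<tau>
  assume motion: "open S \<and> \<tau> \<in> S \<and> X \<tau> = a \<and>
            (\<forall>t\<in>S. \<forall>k\<in>{0..2}. ((\<lambda>s. X s k) has_vector_derivative V t k) (at t)) \<and>
            (\<forall>t\<in>S. \<forall>k\<in>{0..2}. ((\<lambda>s. V s k) has_vector_derivative
                 (1 / m k) *\<^sub>R grav_force m (X t) k) (at t))"
  have "m i \<noteq> 0"
    using tri i unfolding nondeg_m_triangle_def by fastforce
  then show "((\<lambda>s. m i *\<^sub>R cross3 (X s i) (V s i)) has_vector_derivative torque m a i) (at \<tau>)"
    using motion i has_vector_derivative_angular_momentum[of "\<lambda>s. X s i" "\<lambda>s. V s i" \<tau>]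
    by (auto simp: torque_def)
qed

end
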